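(* Let $G$ be a simple graph, $x\ne y$ vertices of $G$, and let $G'$ be obtained from $G$ by the $\diamondsuit_{xy}$-operation. Then $h_0(G)\ge h_0(G')$ and $h_1(G)\ge h_1(G')$.
   Context: All graphs are finite, undirected, without loops; $N(v)$ is the neighbourhood of $v$. The $\diamondsuit_{xy}$-operation: with $X=N(x)\setminus(N(y)\cup\{y\})$, $G'=(G-\{xv:v\in X\})\cup\{yv:v\in X\}$ on the same vertex set. $h_0(G)$ and $h_1(G)$ denote the numbers of Hamiltonian cycles and of Hamiltonian paths (as subgraphs) of $G$, respectively. *)

theory Defs
  imports Main
begin

definition simple_graph :: "'a set \<Rightarrow> 'a set set \<Rightarrow> bool" where
  "simple_graph V E \<longleftrightarrow> finite V \<and> (\<forall>e\<in>E. \<exists>u v. e = {u, v} \<and> u \<noteq> v \<and> u \<in> V \<and> v \<in> V)"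

definition nbhd :: "'a set set \<Rightarrow> 'a \<Rightarrow> 'a set" where
  "nbhd E v = {u. {v, u} \<in> E}"

definition diamond_X :: "'a set set \<Rightarrow> 'a \<Rightarrow> 'a \<Rightarrow> 'a set" where
  "diamond_X E x y = nbhd E x - (nbhd E y \<union> {y})"

definition diamond :: "'a set set \<Rightarrow> 'a \<Rightarrow> 'a \<Rightarrow> 'a set set" where
  "diamond E x y = (E - {{x, v} | v. v \<in> diamond_X E x y}) \<union> {{y, v} | v. v \<in> diamond_X E x y}"

definition path_edges :: "'a list \<Rightarrow> 'a set set" where
  "path_edges vs = {{vs ! i, vs ! Suc i} | i. Suc i < length vs}"

text \<open>Hamiltonian paths as subgraphs (identified by their edge sets, the vertex set being V).\<close>
definition ham_paths :: "'a set \<Rightarrow> 'a set set \<Rightarrow> 'a set set set" where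
  "ham_paths V E = {path_edges vs | vs. distinct vs \<and> set vs = V \<and> path_edges vs \<subseteq> E}"

definition ham_cycles :: "'a set \<Rightarrow> 'a set set \<Rightarrow> 'a set set set" where
  "ham_cycles V E = {path_edges vs \<union> {{last vs, hd vs}} | vs.
      distinct vs \<and> set vs = V \<and> length vs \<ge> 3 \<and> path_edges vs \<union> {{last vs, hd vs}} \<subseteq> E}"

definition h0 :: "'a set \<Rightarrow> 'a set set \<Rightarrow> nat" where
  "h0 V E = card (ham_cycles V E)"

definition h1 :: "'a set \<Rightarrow> 'a set set \<Rightarrow> nat" where
  "h1 V E = card (ham_paths V E)"

end

theory Submission imports Defs begin

(* Every Hamiltonian cycle through x and y consists of two x-y segments
   x, S, y with disjoint interiors S, and the cycle determines its pair of segments up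
   to swapping them.  Let X be the set of vertices moved from x to y.  A segment of
   G' = diamond E x y whose last interior vertex lies in X is reversed, all others
   are kept; the result is a segment of G, because the first interior vertex of a
   G'-segment is adjacent to both x and y in G, while vertices of X are adjacent to x.
   A reversed segment starts with a vertex of X, a kept one never does, so the map is
   invertible on segments and hence injective on Hamiltonian cycles: h0 G' <= h0 G.

   Adding an apex vertex adjacent to all vertices turns Hamiltonian paths of G
   bijectively into Hamiltonian cycles of the extended graph, and the extension
   commutes with the diamond operation; so the path inequality is the cycle
   inequality for the extended graphs. *)

lemma path_edges_Nil [simp]: "path_edges [] = {}"
  by (simp add: path_edges_def)

lemma path_edges_singleton [simp]: "path_edges [a] = {}"
  by (simp add: path_edges_def)

lemma path_edges_Cons_Cons [simp]:
  "path_edges (a # b # t) = insert {a, b} (path_edges (b # t))"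
proof (rule set_eqI, rule iffI)
  fix e assume "e \<in> path_edges (a # b # t)"
  then obtain i where i: "Suc i < length (a # b # t)" "e = {(a # b # t) ! i, (a # b # t) ! Suc i}"
    unfolding path_edges_def by blast
  show "e \<in> insert {a, b} (path_edges (b # t))"
  proof (cases i)
    case 0
    then show ?thesis using i by simp
  next
    case (Suc j)
    then have "Suc j < length (b # t)" "e = {(b # t) ! j, (b # t) ! Suc j}" using i by auto
    then show ?thesis unfolding path_edges_def by blast
  qed
next
  fix e assume "e \<in> insert {a, b} (path_edges (b # t))"
  then show "e \<in> path_edges (a # b # t)"
  proof
    assume "e = {a, b}"
    then have "e = {(a # b # t) ! 0, (a # b # t) ! Suc 0}" by simp
    then show ?thesis unfolding path_edges_def by fastforce
  next
    assume "e \<in> path_edges (b # t)"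
    then obtain j where "Suc j < length (b # t)" "e = {(b # t) ! j, (b # t) ! Suc j}"
      unfolding path_edges_def by blast
    then have "Suc (Suc j) < length (a # b # t)"
      "e = {(a # b # t) ! Suc j, (a # b # t) ! Suc (Suc j)}" by auto
    then show ?thesis unfolding path_edges_def by blast
  qed
qed

lemma path_edges_Cons:
  "path_edges (a # t) = (if t = [] then {} else insert {a, hd t} (path_edges t))"
  by (cases t) auto

lemma path_edges_snoc:
  "path_edges (xs @ [b]) = (if xs = [] then {} else insert {last xs, b} (path_edges xs))"
proof (induction xs)
  case (Cons a t)
  then show ?case by (cases t) auto
qed simp

lemma path_edges_rev [simp]: "path_edges (rev xs) = path_edges xs"
proof (induction xs)
  case (Cons a t)
  have "path_edges (rev (a # t)) = path_edges (rev t @ [a])" by simp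
  also have "\<dots> = (if t = [] then {} else insert {a, hd t} (path_edges t))"
    using Cons by (simp add: path_edges_snoc last_rev insert_commute)
  also have "\<dots> = path_edges (a # t)" by (simp add: path_edges_Cons)
  finally show ?case .
qed simp

lemma path_edges_split:
  "path_edges (xs @ b # ys) = path_edges (xs @ [b]) \<union> path_edges (b # ys)"
proof (induction xs)
  case (Cons a t)
  then show ?case by (cases t) auto
qed simp

lemma path_edges_map: "path_edges (map f xs) = image f ` path_edges xs"
proof (induction xs)
  case (Cons a t)
  then show ?case by (cases t) auto
qed simp

lemma path_edgeE:
  assumes "e \<in> path_edges xs"
  obtains a b where "e = {a, b}" "a \<in> set xs" "b \<in> set xs" "distinct xs \<Longrightarrow> a \<noteq> b"
proof -
  obtain i where i: "Suc i < length xs" "e = {xs ! i, xs ! Suc i}"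
    using assms unfolding path_edges_def by blast
  then have "distinct xs \<Longrightarrow> xs ! i \<noteq> xs ! Suc i" by (simp add: nth_eq_iff_index_eq)
  then show ?thesis using i by (intro that[of "xs ! i" "xs ! Suc i"]) auto
qed

lemma path_edge_avoids: "e \<in> path_edges xs \<Longrightarrow> v \<notin> set xs \<Longrightarrow> v \<notin> e"
  by (erule path_edgeE) auto

lemma path_edges_inj:
  "distinct xs \<Longrightarrow> distinct ys \<Longrightarrow> set xs = set ys \<Longrightarrow> hd xs = hd ys
   \<Longrightarrow> path_edges xs = path_edges ys \<Longrightarrow> xs = ys"
proof (induction xs arbitrary: ys)
  case (Cons a t)
  then obtain t2 where ys: "ys = a # t2" by (cases ys) auto
  have st: "set t = set t2" using Cons.prems ys by auto
  show ?case
  proof (cases "t = []")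
    case True
    then show ?thesis using st ys by simp
  next
    case False
    then have t2: "t2 \<noteq> []" using st by auto
    have a: "a \<notin> set t" "a \<notin> set t2" using Cons.prems ys by auto
    have e1: "path_edges (a # t) = insert {a, hd t} (path_edges t)"
      and e2: "path_edges (a # t2) = insert {a, hd t2} (path_edges t2)"
      using False t2 by (simp_all add: path_edges_Cons)
    have n1: "{a, v} \<notin> path_edges t" and n2: "{a, v} \<notin> path_edges t2" for v
      using path_edge_avoids[of _ t a] path_edge_avoids[of _ t2 a] a by auto
    have "{a, hd t2} \<in> path_edges (a # t)" using Cons.prems(5) ys e2 by auto
    then have "{a, hd t2} = {a, hd t}" using e1 n1 by auto
    moreover have "hd t2 \<noteq> a" using a t2 by (metis hd_in_set)
    ultimately have hd_eq: "hd t = hd t2" by (auto simp: doubleton_eq_iff)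
    then have "path_edges t = path_edges t2"
      using e1 e2 n1 n2 Cons.prems(5) ys by (metis insert_ident)
    then have "t = t2" using Cons.IH[of t2] Cons.prems ys st hd_eq by auto
    then show ?thesis using ys by simp
  qed
qed simp

definition cycle_edges :: "'a list \<Rightarrow> 'a set set" where
  "cycle_edges ws = path_edges ws \<union> {{last ws, hd ws}}"

lemma ham_cycles_cycle_edges:
  "ham_cycles V E =
     {cycle_edges vs | vs. distinct vs \<and> set vs = V \<and> length vs \<ge> 3 \<and> cycle_edges vs \<subseteq> E}"
  unfolding ham_cycles_def cycle_edges_def by simp

lemma cycle_edges_closed: "ws \<noteq> [] \<Longrightarrow> cycle_edges ws = path_edges (ws @ [hd ws])"
  unfolding cycle_edges_def by (simp add: path_edges_snoc)

lemma cycle_edges_Cons: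
  "L \<noteq> [] \<Longrightarrow> cycle_edges (x # L) = insert {x, hd L} (insert {last L, x} (path_edges L))"
  unfolding cycle_edges_def by (auto simp: path_edges_Cons)

lemma cycle_edges_rotate: "cycle_edges (as @ x # bs) = cycle_edges (x # bs @ as)"
proof (cases as)
  case (Cons h t)
  have "cycle_edges (as @ x # bs) = path_edges ((h # t) @ x # (bs @ [h]))"
    using Cons by (simp add: cycle_edges_closed)
  also have "\<dots> = path_edges ((x # bs) @ [h]) \<union> path_edges (h # t @ [x])"
    by (subst path_edges_split) auto
  also have "\<dots> = path_edges ((x # bs) @ h # (t @ [x]))"
    by (rule path_edges_split[symmetric])
  also have "\<dots> = cycle_edges (x # bs @ as)"
    using Cons by (simp add: cycle_edges_closed)
  finally show ?thesis .
qed simp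

lemma cycle_edges_inj:
  assumes "distinct (x # L1)" "distinct (x # L2)" "set L1 = set L2" "L1 \<noteq> []"
    and "cycle_edges (x # L1) = cycle_edges (x # L2)"
  shows "L2 = L1 \<or> L2 = rev L1"
proof -
  have L2: "L2 \<noteq> []" using assms by auto
  have x: "x \<notin> set L1" "x \<notin> set L2" using assms by auto
  have avoid: "path_edges L = {e \<in> cycle_edges (x # L). x \<notin> e}" if "L \<noteq> []" "x \<notin> set L" for L
    using that cycle_edges_Cons[of L x] path_edge_avoids[of _ L x] by auto
  have same_path: "path_edges L1 = path_edges L2"
    using avoid[of L1] avoid[of L2] assms x L2 by simp
  have "{x, hd L2} \<in> cycle_edges (x # L1)" using assms(5) cycle_edges_Cons[OF L2] by auto
  moreover have "{x, hd L2} \<notin> path_edges L1" using path_edge_avoids[of _ L1 x] x by auto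
  moreover have "hd L2 \<noteq> x" using x L2 by (metis hd_in_set)
  ultimately have "hd L2 = hd L1 \<or> hd L2 = last L1"
    using cycle_edges_Cons[OF assms(4)] by (auto simp: doubleton_eq_iff)
  then show ?thesis
  proof
    assume "hd L2 = hd L1"
    then show ?thesis using path_edges_inj[of L1 L2] assms same_path by auto
  next
    assume "hd L2 = last L1"
    then have "rev L1 = L2" using path_edges_inj[of "rev L1" L2] assms same_path
      by (auto simp: hd_rev)
    then show ?thesis by auto
  qed
qed

lemma finite_ham_cycles:
  assumes "finite V"
  shows "finite (ham_cycles V E)"
proof -
  have "e \<subseteq> set vs" if "e \<in> cycle_edges vs" "vs \<noteq> []" for e and vs :: "'a list"
    using that unfolding cycle_edges_def by (auto elim: path_edgeE)
  then have "ham_cycles V E \<subseteq> Pow (Pow V)"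
    unfolding ham_cycles_cycle_edges by fastforce
  then show ?thesis using assms by (meson finite_Pow_iff finite_subset)
qed

subsection \<open>Hamiltonian cycles as two segments between x and y\<close>

definition segment_edges :: "'a \<Rightarrow> 'a list \<Rightarrow> 'a \<Rightarrow> 'a set set" where
  "segment_edges a S b = path_edges (a # S @ [b])"

lemma segment_edges_Nil: "segment_edges a [] b = {{a, b}}"
  unfolding segment_edges_def by simp

lemma segment_edges_nonempty:
  "S \<noteq> [] \<Longrightarrow> segment_edges a S b = insert {a, hd S} (insert {last S, b} (path_edges S))"
  unfolding segment_edges_def by (auto simp: path_edges_Cons path_edges_snoc)

definition two_segment_cycle :: "'a \<Rightarrow> 'a \<Rightarrow> 'a list \<Rightarrow> 'a list \<Rightarrow> 'a set set" where
  "two_segment_cycle x y P R = segment_edges x P y \<union> segment_edges x R y"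

text \<open>P and R are interiors of two segments that together cover V exactly once
  and form a genuine cycle (at least three vertices).\<close>
definition segment_split :: "'a set \<Rightarrow> 'a \<Rightarrow> 'a \<Rightarrow> 'a list \<Rightarrow> 'a list \<Rightarrow> bool" where
  "segment_split V x y P R \<longleftrightarrow> distinct (x # y # P @ R) \<and> set (x # y # P @ R) = V \<and> P @ R \<noteq> []"

lemma two_segment_cycle_edges:
  "two_segment_cycle x y P R = cycle_edges (x # P @ y # rev R)"
proof -
  have "cycle_edges (x # P @ y # rev R) = path_edges ((x # P) @ y # (rev R @ [x]))"
    by (simp add: cycle_edges_closed)
  also have "\<dots> = path_edges ((x # P) @ [y]) \<union> path_edges (y # rev R @ [x])"
    by (rule path_edges_split)
  also have "path_edges (y # rev R @ [x]) = path_edges (rev (x # R @ [y]))" by simp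
  also have "\<dots> = path_edges (x # R @ [y])" by (rule path_edges_rev)
  finally show ?thesis unfolding two_segment_cycle_def segment_edges_def by simp
qed

lemma two_segment_cycle_swap: "two_segment_cycle x y P R = two_segment_cycle x y R P"
  unfolding two_segment_cycle_def by auto

lemma two_segment_cycle_in_ham_cycles:
  "segment_split V x y P R \<Longrightarrow> two_segment_cycle x y P R \<subseteq> E
   \<Longrightarrow> two_segment_cycle x y P R \<in> ham_cycles V E"
  unfolding ham_cycles_cycle_edges segment_split_def two_segment_cycle_edges
  by (rule CollectI, rule exI[of _ "x # P @ y # rev R"]) (auto simp: Suc_le_eq)

lemma ham_cycle_split:
  assumes "H \<in> ham_cycles V E" "x \<in> V" "y \<in> V" "x \<noteq> y"
  obtains P R where "segment_split V x y P R" "H = two_segment_cycle x y P R"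
proof -
  obtain vs where vs: "H = cycle_edges vs" "distinct vs" "set vs = V" "length vs \<ge> 3"
    using assms(1) unfolding ham_cycles_cycle_edges by auto
  obtain as bs where ab: "vs = as @ x # bs" using split_list[of x vs] vs assms by auto
  have "y \<in> set (bs @ as)" using ab vs assms by auto
  then obtain P Q where PQ: "bs @ as = P @ y # Q" using split_list by metis
  have "H = cycle_edges (x # P @ y # Q)" using vs(1) ab cycle_edges_rotate PQ by metis
  then have "H = two_segment_cycle x y P (rev Q)" by (simp add: two_segment_cycle_edges)
  moreover have "distinct (x # P @ y # Q)" "set (x # P @ y # Q) = V" "length (x # P @ y # Q) \<ge> 3"
    using vs ab arg_cong[OF PQ, of set] arg_cong[OF PQ, of length] arg_cong[OF PQ, of distinct]
    by auto
  then have "segment_split V x y P (rev Q)" unfolding segment_split_def by auto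
  ultimately show ?thesis using that by blast
qed

lemma two_segment_cycle_unique:
  assumes "segment_split V x y P1 R1" "segment_split V x y P2 R2"
    and "two_segment_cycle x y P1 R1 = two_segment_cycle x y P2 R2"
  shows "(P2 = P1 \<and> R2 = R1) \<or> (P2 = R1 \<and> R2 = P1)"
proof -
  have "P2 @ y # rev R2 = P1 @ y # rev R1 \<or> P2 @ y # rev R2 = rev (P1 @ y # rev R1)"
    using assms unfolding segment_split_def two_segment_cycle_edges
    by (intro cycle_edges_inj[where x = x]) (auto simp: ac_simps)
  moreover have "y \<notin> set P1" "y \<notin> set R1" "y \<notin> set P2" "y \<notin> set R2"
    using assms unfolding segment_split_def by auto
  ultimately show ?thesis by (auto simp: append_Cons_eq_iff)
qed

subsection \<open>The cycle inequality\<close>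

definition orient :: "'a set \<Rightarrow> 'a list \<Rightarrow> 'a list" where
  "orient X S = (if S \<noteq> [] \<and> last S \<in> X then rev S else S)"

text \<open>Inverse of orient on segments that do not start in X.\<close>
definition unorient :: "'a set \<Rightarrow> 'a list \<Rightarrow> 'a list" where
  "unorient X S = (if S \<noteq> [] \<and> hd S \<in> X then rev S else S)"

lemma set_orient [simp]: "set (orient X S) = set S"
  and distinct_orient [simp]: "distinct (orient X S) = distinct S"
  and orient_eq_Nil_iff [simp]: "(orient X S = []) = (S = [])"
  unfolding orient_def by auto

lemma segment_split_orient:
  "segment_split V x y P R \<Longrightarrow> segment_split V x y (orient X P) (orient X R)"
  unfolding segment_split_def by auto

context
  fixes E :: "'a set set" and x y :: 'a
  assumes x_neq_y: "x \<noteq> y" and no_loop: "{x} \<notin> E"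
begin

lemma diamond_edge_away:
  "\<lbrakk>a \<noteq> x; a \<noteq> y; b \<noteq> x; b \<noteq> y; {a, b} \<in> diamond E x y\<rbrakk> \<Longrightarrow> {a, b} \<in> E"
  unfolding diamond_def by (auto simp: doubleton_eq_iff)

lemma diamond_edge_at_x:
  "\<lbrakk>v \<noteq> x; v \<noteq> y; {x, v} \<in> diamond E x y\<rbrakk> \<Longrightarrow> {x, v} \<in> E \<and> {y, v} \<in> E"
  using x_neq_y no_loop unfolding diamond_def diamond_X_def nbhd_def
  by (auto simp: doubleton_eq_iff)

lemma diamond_edge_at_y:
  "\<lbrakk>v \<noteq> x; v \<noteq> y; {v, y} \<in> diamond E x y; v \<notin> diamond_X E x y\<rbrakk> \<Longrightarrow> {v, y} \<in> E"
  using x_neq_y unfolding diamond_def by (auto simp: doubleton_eq_iff)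

lemma diamond_edge_xy: "{x, y} \<in> diamond E x y \<Longrightarrow> {x, y} \<in> E"
  using x_neq_y no_loop unfolding diamond_def diamond_X_def nbhd_def
  by (auto simp: doubleton_eq_iff)

lemma diamond_X_adjacent_x: "v \<in> diamond_X E x y \<Longrightarrow> {x, v} \<in> E"
  unfolding diamond_X_def nbhd_def by auto

lemma diamond_edge_at_x_not_moved:
  "\<lbrakk>v \<noteq> x; v \<noteq> y; {x, v} \<in> diamond E x y\<rbrakk> \<Longrightarrow> v \<notin> diamond_X E x y"
  using diamond_edge_at_x[of v] unfolding diamond_X_def nbhd_def by auto

lemma orient_segment_in_E:
  assumes "distinct S" "x \<notin> set S" "y \<notin> set S" "segment_edges x S y \<subseteq> diamond E x y"
  shows "segment_edges x (orient (diamond_X E x y) S) y \<subseteq> E"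
proof (cases "S = []")
  case True
  then show ?thesis using assms diamond_edge_xy by (simp add: segment_edges_Nil orient_def)
next
  case False
  let ?X = "diamond_X E x y"
  have ends: "hd S \<noteq> x" "hd S \<noteq> y" "last S \<noteq> x" "last S \<noteq> y"
    using False assms by (metis hd_in_set last_in_set)+
  have seg: "segment_edges x S y = insert {x, hd S} (insert {last S, y} (path_edges S))"
    using segment_edges_nonempty[OF False] .
  have inner: "path_edges S \<subseteq> E"
  proof
    fix e assume e: "e \<in> path_edges S"
    then obtain a b where "e = {a, b}" "a \<in> set S" "b \<in> set S" by (rule path_edgeE)
    then show "e \<in> E" using diamond_edge_away[of a b] e seg assms by auto
  qed
  have first: "{x, hd S} \<in> E \<and> {y, hd S} \<in> E"
    using diamond_edge_at_x[of "hd S"] ends seg assms(4) by auto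
  show ?thesis
  proof (cases "last S \<in> ?X")
    case True
    have "segment_edges x (orient ?X S) y = insert {x, last S} (insert {hd S, y} (path_edges S))"
      using True False by (simp add: orient_def segment_edges_nonempty hd_rev last_rev)
    then show ?thesis using inner first diamond_X_adjacent_x[OF True]
      by (auto simp: insert_commute doubleton_eq_iff)
  next
    case False
    then have "{last S, y} \<in> E" using diamond_edge_at_y[of "last S"] ends seg assms(4) by auto
    then show ?thesis using False inner first seg by (simp add: orient_def)
  qed
qed

lemma unorient_orient:
  assumes "distinct S" "x \<notin> set S" "y \<notin> set S" "segment_edges x S y \<subseteq> diamond E x y"
  shows "unorient (diamond_X E x y) (orient (diamond_X E x y) S) = S"
proof (cases "S = []")
  case False
  have "hd S \<noteq> x" "hd S \<noteq> y" using False assms by (metis hd_in_set)+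
  then have "hd S \<notin> diamond_X E x y"
    using diamond_edge_at_x_not_moved[of "hd S"] segment_edges_nonempty[OF False] assms(4) by auto
  then show ?thesis using False by (simp add: orient_def unorient_def hd_rev)
qed (simp add: orient_def unorient_def)

theorem card_ham_cycles_diamond_le:
  assumes "x \<in> V" "y \<in> V" "finite V"
  shows "card (ham_cycles V (diamond E x y)) \<le> card (ham_cycles V E)"
proof -
  let ?X = "diamond_X E x y" and ?E' = "diamond E x y"
  let ?C = "two_segment_cycle x y"
  define sends where "sends H K \<longleftrightarrow> (\<exists>P R. segment_split V x y P R \<and> H = ?C P R
    \<and> segment_edges x P y \<subseteq> ?E' \<and> segment_edges x R y \<subseteq> ?E' \<and> K = ?C (orient ?X P) (orient ?X R))"
    for H K
  have image: "\<exists>K \<in> ham_cycles V E. sends H K" if H: "H \<in> ham_cycles V ?E'" for H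
  proof -
    obtain P R where PR: "segment_split V x y P R" "H = ?C P R"
      using ham_cycle_split[OF H assms(1,2) x_neq_y] .
    have "H \<subseteq> ?E'" using H unfolding ham_cycles_def by auto
    then have segs: "segment_edges x P y \<subseteq> ?E'" "segment_edges x R y \<subseteq> ?E'"
      using PR unfolding two_segment_cycle_def by auto
    then have "?C (orient ?X P) (orient ?X R) \<subseteq> E"
      using orient_segment_in_E[of P] orient_segment_in_E[of R] PR(1)
      unfolding two_segment_cycle_def segment_split_def by auto
    then have "?C (orient ?X P) (orient ?X R) \<in> ham_cycles V E"
      by (rule two_segment_cycle_in_ham_cycles[OF segment_split_orient[OF PR(1)]])
    then show ?thesis using PR segs unfolding sends_def by blast
  qed
  have unique: "H1 = H2" if "sends H1 K" "sends H2 K" for H1 H2 K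
  proof -
    obtain P1 R1 where 1: "segment_split V x y P1 R1" "H1 = ?C P1 R1"
      "segment_edges x P1 y \<subseteq> ?E'" "segment_edges x R1 y \<subseteq> ?E'"
      "K = ?C (orient ?X P1) (orient ?X R1)"
      using \<open>sends H1 K\<close> unfolding sends_def by blast
    obtain P2 R2 where 2: "segment_split V x y P2 R2" "H2 = ?C P2 R2"
      "segment_edges x P2 y \<subseteq> ?E'" "segment_edges x R2 y \<subseteq> ?E'"
      "K = ?C (orient ?X P2) (orient ?X R2)"
      using \<open>sends H2 K\<close> unfolding sends_def by blast
    have undo: "unorient ?X (orient ?X S) = S" if "S \<in> {P1, R1, P2, R2}" for S
      using that 1 2 unorient_orient[of S] unfolding segment_split_def by auto
    have "(orient ?X P2 = orient ?X P1 \<and> orient ?X R2 = orient ?X R1) \<or>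
          (orient ?X P2 = orient ?X R1 \<and> orient ?X R2 = orient ?X P1)"
      using two_segment_cycle_unique[OF segment_split_orient[OF 1(1)] segment_split_orient[OF 2(1)]]
        1(5) 2(5) by auto
    then have "(P2 = P1 \<and> R2 = R1) \<or> (P2 = R1 \<and> R2 = P1)"
      using undo by (metis insertCI)
    then show "H1 = H2" using 1(2) 2(2) two_segment_cycle_swap by metis
  qed
  show ?thesis
    by (rule card_le_if_inj_on_rel[OF finite_ham_cycles[OF assms(3)], where r = sends])
      (use image unique in blast)+
qed

end

subsection \<open>The ends of a Hamiltonian path are determined by its edges\<close>

definition two_neighbours :: "'a set set \<Rightarrow> 'a \<Rightarrow> bool" where
  "two_neighbours F v \<longleftrightarrow> (\<exists>a b. a \<noteq> b \<and> {v, a} \<in> F \<and> {v, b} \<in> F)"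

lemma hd_not_two_neighbours:
  assumes "distinct ws" "length ws \<ge> 2"
  shows "\<not> two_neighbours (path_edges ws) (hd ws)"
proof -
  obtain v t where ws: "ws = v # t" "t \<noteq> []"
    using assms(2) by (cases ws; cases "tl ws") auto
  have v: "v \<notin> set t" using assms(1) ws by auto
  have unique: "a = hd t" if "{v, a} \<in> path_edges ws" for a
  proof -
    have "{v, a} \<notin> path_edges t" using path_edge_avoids[of _ t v] v by auto
    then have "{v, a} = {v, hd t}" using that ws by (simp add: path_edges_Cons)
    moreover have "hd t \<noteq> v" using v ws by (metis hd_in_set)
    ultimately show ?thesis by (auto simp: doubleton_eq_iff)
  qed
  have "hd ws = v" using ws by simp
  then show ?thesis using unique unfolding two_neighbours_def by blast
qed

lemma path_end_iff:
  assumes "distinct vs" "length vs \<ge> 2" "v \<in> set vs"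
  shows "v \<in> {hd vs, last vs} \<longleftrightarrow> \<not> two_neighbours (path_edges vs) v"
proof
  assume "v \<in> {hd vs, last vs}"
  then consider "v = hd vs" | "v = hd (rev vs)" by (auto simp: hd_rev)
  then show "\<not> two_neighbours (path_edges vs) v"
  proof cases
    case 1
    then show ?thesis using hd_not_two_neighbours[OF assms(1,2)] by simp
  next
    case 2
    then show ?thesis using hd_not_two_neighbours[of "rev vs"] assms(1,2) by simp
  qed
next
  assume no_two: "\<not> two_neighbours (path_edges vs) v"
  show "v \<in> {hd vs, last vs}"
  proof (rule ccontr)
    assume inner: "v \<notin> {hd vs, last vs}"
    obtain as bs where vs: "vs = as @ v # bs" using split_list assms(3) by metis
    then have ne: "as \<noteq> []" "bs \<noteq> []" using inner by auto
    have split: "path_edges vs = path_edges (as @ [v]) \<union> path_edges (v # bs)"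
      unfolding vs by (rule path_edges_split)
    have "{last as, v} \<in> path_edges (as @ [v])" "{v, hd bs} \<in> path_edges (v # bs)"
      using ne by (simp_all add: path_edges_snoc path_edges_Cons)
    then have "{last as, v} \<in> path_edges vs" "{v, hd bs} \<in> path_edges vs"
      unfolding split by blast+
    moreover have "{last as, v} = {v, last as}" by (rule insert_commute)
    moreover have "last as \<noteq> hd bs"
    proof -
      have "last as \<in> set as" "hd bs \<in> set bs" using ne by auto
      moreover have "set as \<inter> set bs = {}" using assms(1) vs by auto
      ultimately show ?thesis by (metis disjoint_iff)
    qed
    ultimately show False using no_two unfolding two_neighbours_def by metis
  qed
qed

lemma path_ends_unique:
  assumes "distinct vs" "distinct ws" "length vs \<ge> 2" "set ws = set vs"
    and "path_edges vs = path_edges ws"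
  shows "{hd vs, last vs} = {hd ws, last ws}"
proof -
  have ends: "{hd us, last us} = {v \<in> set us. \<not> two_neighbours (path_edges us) v}"
    if "distinct us" "length us \<ge> 2" for us :: "'a list"
  proof -
    have "us \<noteq> []" using that by auto
    then have "hd us \<in> set us" "last us \<in> set us" by auto
    then show ?thesis using path_end_iff[OF that] by blast
  qed
  have "length ws \<ge> 2" using assms distinct_card by metis
  then show ?thesis using ends[of vs] ends[of ws] assms by simp
qed

subsection \<open>Hamiltonian paths as Hamiltonian cycles through an apex\<close>

text \<open>The graph extended by a new vertex None adjacent to every vertex.\<close>
definition apex_vertices :: "'a set \<Rightarrow> 'a option set" where
  "apex_vertices V = insert None (Some ` V)"

definition apex_edges :: "'a set \<Rightarrow> 'a set set \<Rightarrow> 'a option set set" where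
  "apex_edges V E = image Some ` E \<union> (\<lambda>v. {None, Some v}) ` V"

lemma Some_image_eq_iff: "(Some ` A = Some ` B) = (A = B)"
  by (simp add: inj_image_eq_iff)

lemma Some_image_in_apex_edges [simp]: "(Some ` e \<in> apex_edges V E) = (e \<in> E)"
  unfolding apex_edges_def by (auto simp: inj_image_eq_iff)

lemma nbhd_apex_edges:
  assumes "v \<in> V"
  shows "nbhd (apex_edges V E) (Some v) = insert None (Some ` nbhd E v)"
proof (rule set_eqI)
  fix u
  show "u \<in> nbhd (apex_edges V E) (Some v) \<longleftrightarrow> u \<in> insert None (Some ` nbhd E v)"
  proof (cases u)
    case None
    have "{Some v, None} \<in> apex_edges V E"
      unfolding apex_edges_def using assms by (auto simp: insert_commute)
    then show ?thesis using None unfolding nbhd_def by simp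
  next
    case (Some w)
    have "{Some v, Some w} = Some ` {v, w}" by simp
    then have "({Some v, Some w} \<in> apex_edges V E) = ({v, w} \<in> E)"
      by (metis Some_image_in_apex_edges)
    then show ?thesis using Some unfolding nbhd_def by auto
  qed
qed

lemma diamond_apex_edges:
  assumes "x \<in> V" "y \<in> V"
  shows "diamond (apex_edges V E) (Some x) (Some y) = apex_edges V (diamond E x y)"
proof -
  let ?X = "diamond_X E x y"
  have X: "diamond_X (apex_edges V E) (Some x) (Some y) = Some ` ?X"
    unfolding diamond_X_def using assms by (auto simp: nbhd_apex_edges Some_image_eq_iff)
  have lift: "{{Some z, v} |v. v \<in> Some ` ?X} = image Some ` {{z, v} |v. v \<in> ?X}" for z
    by (simp add: Setcompr_eq_image image_image)
  have inj: "inj (image Some :: 'a set \<Rightarrow> 'a option set)"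
    by (simp add: inj_def Some_image_eq_iff)
  have disjoint: "(\<lambda>v. {None, Some v}) ` V \<inter> image Some ` {{x, v} |v. v \<in> ?X} = {}"
    by auto
  have "diamond (apex_edges V E) (Some x) (Some y) =
     (apex_edges V E - image Some ` {{x, v} |v. v \<in> ?X}) \<union> image Some ` {{y, v} |v. v \<in> ?X}"
    unfolding diamond_def X lift ..
  also have "\<dots> = apex_edges V (diamond E x y)"
    unfolding apex_edges_def diamond_def image_Un image_set_diff[OF inj] using disjoint by blast
  finally show ?thesis .
qed

lemma cycle_edges_apex:
  assumes "vs \<noteq> []"
  shows "cycle_edges (None # map Some vs) =
    insert {None, Some (hd vs)} (insert {Some (last vs), None} (image Some ` path_edges vs))"
  using cycle_edges_Cons[of "map Some vs" None] assms by (simp add: path_edges_map hd_map last_map)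

lemma path_of_apex_cycle:
  "vs \<noteq> [] \<Longrightarrow> {e. Some ` e \<in> cycle_edges (None # map Some vs)} = path_edges vs"
  by (auto simp: cycle_edges_apex Some_image_eq_iff)

lemma apex_ham_cycleE:
  assumes "C \<in> ham_cycles (apex_vertices V) (apex_edges V E)"
  obtains vs where "distinct vs" "set vs = V" "vs \<noteq> []" "C = cycle_edges (None # map Some vs)"
    "path_edges vs \<subseteq> E"
proof -
  obtain ws where ws: "C = cycle_edges ws" "distinct ws" "set ws = apex_vertices V"
    "length ws \<ge> 3" "cycle_edges ws \<subseteq> apex_edges V E"
    using assms unfolding ham_cycles_cycle_edges by auto
  obtain as bs where ab: "ws = as @ None # bs"
    using split_list[of None ws] ws(3) unfolding apex_vertices_def by auto
  define L where "L = bs @ as"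
  have C: "C = cycle_edges (None # L)" using ws(1) ab cycle_edges_rotate L_def by metis
  have L: "distinct (None # L)" "set (None # L) = apex_vertices V" "length L \<ge> 2"
    using ws(2-4) ab unfolding L_def by auto
  have set_L: "set L = Some ` V"
  proof -
    have "set L = insert None (set L) - {None}" using L(1) by auto
    then show ?thesis using L(2) unfolding apex_vertices_def by auto
  qed
  define vs where "vs = map the L"
  have "map (Some \<circ> the) L = L" using set_L by (intro map_idI) auto
  then have L_vs: "L = map Some vs" unfolding vs_def by simp
  have vs: "distinct vs" "set vs = V" "vs \<noteq> []"
    using L set_L L_vs by (auto simp: distinct_map inj_image_eq_iff)
  have "image Some ` path_edges vs \<subseteq> apex_edges V E"
    using ws(5) ws(1) C L_vs cycle_edges_apex[OF vs(3)] by auto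
  then have "path_edges vs \<subseteq> E" by auto
  then show ?thesis using that vs C L_vs by blast
qed

theorem card_ham_paths_apex:
  assumes "finite V" "card V \<ge> 2"
  shows "card (ham_paths V E) = card (ham_cycles (apex_vertices V) (apex_edges V E))"
proof -
  let ?HC = "ham_cycles (apex_vertices V) (apex_edges V E)"
  define del_apex where "del_apex C = {e. Some ` e \<in> C}" for C :: "'a option set set"
  have onto: "del_apex ` ?HC = ham_paths V E"
  proof
    show "del_apex ` ?HC \<subseteq> ham_paths V E"
    proof
      fix P assume "P \<in> del_apex ` ?HC"
      then obtain C where "C \<in> ?HC" "P = del_apex C" by blast
      then show "P \<in> ham_paths V E" unfolding ham_paths_def del_apex_def
        by (elim apex_ham_cycleE) (auto simp: path_of_apex_cycle)
    qed
  next
    show "ham_paths V E \<subseteq> del_apex ` ?HC"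
    proof
      fix P assume "P \<in> ham_paths V E"
      then obtain vs where vs: "P = path_edges vs" "distinct vs" "set vs = V" "path_edges vs \<subseteq> E"
        unfolding ham_paths_def by auto
      have len: "length vs \<ge> 2" using vs assms distinct_card by metis
      then have ne: "vs \<noteq> []" by auto
      have "cycle_edges (None # map Some vs) \<subseteq> apex_edges V E"
        unfolding cycle_edges_apex[OF ne] using vs hd_in_set[OF ne] last_in_set[OF ne]
        unfolding apex_edges_def by (auto simp: insert_commute)
      moreover have "distinct (None # map Some vs)" "set (None # map Some vs) = apex_vertices V"
        using vs unfolding apex_vertices_def by (auto simp: distinct_map)
      moreover have "length (None # map Some vs) \<ge> 3" using len by simp
      ultimately have "cycle_edges (None # map Some vs) \<in> ?HC"
        unfolding ham_cycles_cycle_edges by blast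
      moreover have "del_apex (cycle_edges (None # map Some vs)) = P"
        using path_of_apex_cycle[OF ne] vs unfolding del_apex_def by simp
      ultimately show "P \<in> del_apex ` ?HC" by (metis image_eqI)
    qed
  qed
  have "inj_on del_apex ?HC"
  proof (rule inj_onI)
    fix C1 C2 assume C1: "C1 \<in> ?HC" and C2: "C2 \<in> ?HC" and eq: "del_apex C1 = del_apex C2"
    obtain v1 where v1: "distinct v1" "set v1 = V" "v1 \<noteq> []" "C1 = cycle_edges (None # map Some v1)"
      using C1 by (rule apex_ham_cycleE)
    obtain v2 where v2: "distinct v2" "set v2 = V" "v2 \<noteq> []" "C2 = cycle_edges (None # map Some v2)"
      using C2 by (rule apex_ham_cycleE)
    have same_path: "path_edges v1 = path_edges v2"
      using eq v1 v2 path_of_apex_cycle unfolding del_apex_def by metis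
    have "length v1 \<ge> 2" using v1 assms distinct_card by metis
    then have "{hd v1, last v1} = {hd v2, last v2}"
      using path_ends_unique[OF v1(1) v2(1)] v1 v2 same_path by simp
    then show "C1 = C2" using v1 v2 same_path
      by (auto simp: cycle_edges_apex doubleton_eq_iff insert_commute)
  qed
  then show ?thesis using card_image onto by fastforce
qed

theorem mainTheorem9:
  fixes V :: "'a set" and E :: "'a set set" and x y :: 'a
  assumes "simple_graph V E" and "x \<in> V" and "y \<in> V" and "x \<noteq> y"
  shows "h0 V E \<ge> h0 V (diamond E x y) \<and> h1 V E \<ge> h1 V (diamond E x y)"
proof -
  have fin: "finite V" and no_loop: "{x} \<notin> E"
    using assms(1) unfolding simple_graph_def by (auto simp: doubleton_eq_iff)
  have "card {x, y} \<le> card V" using assms(2,3) fin by (intro card_mono) auto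
  then have two: "card V \<ge> 2" using assms(4) by simp
  let ?V' = "apex_vertices V" and ?E' = "apex_edges V E"
  have apex: "finite ?V'" "Some x \<in> ?V'" "Some y \<in> ?V'" "Some x \<noteq> Some y" "{Some x} \<notin> ?E'"
    using fin assms(2-4) no_loop Some_image_in_apex_edges[of "{x}"]
    unfolding apex_vertices_def by auto
  have "h1 V (diamond E x y) = card (ham_cycles ?V' (apex_edges V (diamond E x y)))"
    unfolding h1_def using card_ham_paths_apex[OF fin two] .
  also have "\<dots> = card (ham_cycles ?V' (diamond ?E' (Some x) (Some y)))"
    using diamond_apex_edges[OF assms(2,3)] by simp
  also have "\<dots> \<le> card (ham_cycles ?V' ?E')"
    using card_ham_cycles_diamond_le[OF apex(4,5) apex(2,3,1)] .
  also have "\<dots> = h1 V E"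
    unfolding h1_def using card_ham_paths_apex[OF fin two] by simp
  finally show ?thesis
    using card_ham_cycles_diamond_le[OF assms(4) no_loop assms(2,3) fin] unfolding h0_def by simp
qed

end
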